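(* Let $\Gamma=(U\cup V,E)$ be a $3$-regular bipartite graph with $m=|U|=|V|$, and let $\hat\Gamma$ be as described in the context. For any $2$-factor $F$ of $\Gamma$ and any function $f:F\to\{0,1\}$, the set $\mu(F,f)$ contains exactly $2^{2m}$ perfect matchings.
   Context: Construction of $\hat\Gamma$: for each vertex $v$ of $\Gamma$ with neighbours $x,y,z$, there are four inner vertices $a_{v,S}$, one for each subset $S\subseteq\{x,y,z\}$ of even size, and six outer vertices $b_{v,u,0},b_{v,u,1}$ for $u\in\{x,y,z\}$. Within the gadget, $a_{v,S}$ is adjacent to $b_{v,u,1}$ if $u\in S$ and to $b_{v,u,0}$ if $u\notin S$. For each edge $e=\{u,v\}\in E$ and $i\in\{0,1\}$ there is an edge $e_i$ of $\hat\Gamma$ joining $b_{v,u,i}$ and $b_{u,v,i}$. There are no other edges. A perfect matching $\mu$ of $\hat\Gamma$ is uniform if for every $e\in E$ at most one of $e_0,e_1$ is in $\mu$; for such $\mu$, $F_\mu\subseteq E$ is the set of $e\in E$ such that exactly one of $e_0,e_1$ is in $\mu$, and $f_\mu:F_\mu\to\{0,1\}$ is given by $f_\mu(e)=i$ iff $e_i\in\mu$. A $2$-factor of $\Gamma$ is a set $F\subseteq E$ such that every vertex of $\Gamma$ is incident to exactly two edges of $F$. For a $2$-factor $F$ and $f:F\to\{0,1\}$, $\mu(F,f)$ denotes the set of (uniform) perfect matchings $\mu$ of $\hat\Gamma$ with $F_\mu=F$ and $f_\mu=f$. *)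

theory Defs
  imports Main
begin

definition nbrs :: "'a set set \<Rightarrow> 'a \<Rightarrow> 'a set" where
  "nbrs E x = {y. {x, y} \<in> E}"

definition cubic_bipartite :: "'a set \<Rightarrow> 'a set \<Rightarrow> 'a set set \<Rightarrow> bool" where
  "cubic_bipartite U V E \<longleftrightarrow> finite U \<and> finite V \<and> U \<inter> V = {} \<and>
     (\<forall>e\<in>E. \<exists>u\<in>U. \<exists>v\<in>V. e = {u, v}) \<and>
     (\<forall>x\<in>U \<union> V. card (nbrs E x) = 3)"

definition two_factor :: "'a set \<Rightarrow> 'a set set \<Rightarrow> 'a set set \<Rightarrow> bool" where
  "two_factor W E F \<longleftrightarrow> F \<subseteq> E \<and> (\<forall>x\<in>W. card {e\<in>F. x \<in> e} = 2)"

text \<open>Vertices of hat Gamma: inner vertices a_{v,S} and outer vertices b_{v,u,i}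
  (with i \<in> {0,1} encoded as bool, True = 1).\<close>
datatype 'a hvert = Inner 'a "'a set" | Outer 'a 'a bool

definition hat_verts :: "'a set \<Rightarrow> 'a set set \<Rightarrow> 'a hvert set" where
  "hat_verts W E =
     {Inner v S | v S. v \<in> W \<and> S \<subseteq> nbrs E v \<and> even (card S)} \<union>
     {Outer v u i | v u i. v \<in> W \<and> u \<in> nbrs E v}"

definition cross_edge :: "'a \<Rightarrow> 'a \<Rightarrow> bool \<Rightarrow> 'a hvert set" where
  "cross_edge u v i = {Outer v u i, Outer u v i}"

definition hat_edges :: "'a set \<Rightarrow> 'a set set \<Rightarrow> 'a hvert set set" where
  "hat_edges W E =
     {{Inner v S, Outer v u (u \<in> S)} | v S u.
        v \<in> W \<and> S \<subseteq> nbrs E v \<and> even (card S) \<and> u \<in> nbrs E v} \<union>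
     {cross_edge u v i | u v i. {u, v} \<in> E}"

definition perfect_matching :: "'a hvert set \<Rightarrow> 'a hvert set set \<Rightarrow> 'a hvert set set \<Rightarrow> bool" where
  "perfect_matching VV EE M \<longleftrightarrow> M \<subseteq> EE \<and> (\<forall>x\<in>VV. \<exists>!e. e \<in> M \<and> x \<in> e)"

definition uniform :: "'a set set \<Rightarrow> 'a hvert set set \<Rightarrow> bool" where
  "uniform E M \<longleftrightarrow> (\<forall>u v. {u, v} \<in> E \<longrightarrow>
      \<not> (cross_edge u v False \<in> M \<and> cross_edge u v True \<in> M))"

definition F_of :: "'a set set \<Rightarrow> 'a hvert set set \<Rightarrow> 'a set set" where
  "F_of E M = {e \<in> E. \<exists>u v. e = {u, v} \<and>
      ((cross_edge u v False \<in> M) \<noteq> (cross_edge u v True \<in> M))}"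

definition mu_set :: "'a set \<Rightarrow> 'a set set \<Rightarrow> 'a set set \<Rightarrow> ('a set \<Rightarrow> bool) \<Rightarrow> 'a hvert set set set" where
  "mu_set W E F f = {M. perfect_matching (hat_verts W E) (hat_edges W E) M \<and> uniform E M \<and>
      F_of E M = F \<and> (\<forall>u v. {u, v} \<in> F \<longrightarrow> cross_edge u v (f {u, v}) \<in> M)}"

end

theory Submission
  imports Defs "HOL-Library.FuncSet"
begin

text \<open>A matching in mu(F,f) contains the cross edge e_{f(e)} for every e \<in> F and no other cross edge,
  so it is determined by its edges inside the gadgets, and these can be chosen independently at every
  vertex v of Gamma. Exactly two neighbours x, y of v are joined to v by edges of F; the prescribed
  cross edges cover b_{v,x,f(vx)} and b_{v,y,f(vy)}, and the gadget edges at v must match the four inner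
  vertices a_{v,S} with the four remaining outer vertices. There are exactly two such matchings, hence
  |mu(F,f)| = 2^|U \<union> V| = 2^(2m).\<close>

lemma ex1_mem_image_iff:
  assumes "inj_on g D" and "X \<subseteq> D"
  shows "(\<exists>!e. e \<in> g ` X \<and> P e) \<longleftrightarrow> (\<exists>!d. d \<in> X \<and> P (g d))"
proof
  assume "\<exists>!e. e \<in> g ` X \<and> P e"
  then obtain d where "d \<in> X" "P (g d)" and uniq: "\<And>e. e \<in> g ` X \<Longrightarrow> P e \<Longrightarrow> e = g d"
    by blast
  then show "\<exists>!d. d \<in> X \<and> P (g d)"
    using assms inj_onD[OF assms(1)] by (intro ex1I[of _ d]) blast+
next
  assume "\<exists>!d. d \<in> X \<and> P (g d)"
  then show "\<exists>!e. e \<in> g ` X \<and> P e" by blast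
qed

lemma subset_image_eq_image_iff:
  assumes "inj_on g D" and "L \<subseteq> g ` D" and "T \<subseteq> D"
  shows "L = g ` T \<longleftrightarrow> (\<forall>d\<in>D. g d \<in> L \<longleftrightarrow> d \<in> T)"
proof
  assume "L = g ` T"
  then show "\<forall>d\<in>D. g d \<in> L \<longleftrightarrow> d \<in> T"
    using assms(1,3) by (simp add: inj_on_image_mem_iff)
next
  assume "\<forall>d\<in>D. g d \<in> L \<longleftrightarrow> d \<in> T"
  then show "L = g ` T"
    using assms(2,3) by blast
qed

lemma ex1_fst_eq_iff: "(\<exists>!d. d \<in> X \<and> fst d = a) \<longleftrightarrow> (\<exists>!b. (a, b) \<in> X)"
  by (auto simp: Ex1_def)

lemma ex1_snd_eq_iff: "(\<exists>!d. d \<in> X \<and> snd d = b \<and> Q (fst d)) \<longleftrightarrow> (\<exists>!a. (a, b) \<in> X \<and> Q a)"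
  by (auto simp: Ex1_def)

lemma ex1_bool_pair_iff:
  "(\<exists>!st :: bool \<times> bool. P st) \<longleftrightarrow>
    (P (True, True) \<and> \<not> P (True, False) \<and> \<not> P (False, True) \<and> \<not> P (False, False)) \<or>
    (\<not> P (True, True) \<and> P (True, False) \<and> \<not> P (False, True) \<and> \<not> P (False, False)) \<or>
    (\<not> P (True, True) \<and> \<not> P (True, False) \<and> P (False, True) \<and> \<not> P (False, False)) \<or>
    (\<not> P (True, True) \<and> \<not> P (True, False) \<and> \<not> P (False, True) \<and> P (False, False))"
  unfolding Ex1_def split_paired_Ex split_paired_All all_bool_eq ex_bool_eq by auto

lemma ex1_mem_triple_iff:
  assumes "distinct [x, y, z]"
  shows "(\<exists>!u. u \<in> {x, y, z} \<and> P u) \<longleftrightarrow>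
    (P x \<and> \<not> P y \<and> \<not> P z) \<or> (\<not> P x \<and> P y \<and> \<not> P z) \<or> (\<not> P x \<and> \<not> P y \<and> P z)"
  using assms by auto

lemma ball_fibres_iff:
  "(\<And>x. x \<in> A \<Longrightarrow> g x \<in> B) \<Longrightarrow> (\<forall>x\<in>A. P x (g x)) \<longleftrightarrow> (\<forall>y\<in>B. \<forall>x\<in>A. g x = y \<longrightarrow> P x y)"
  by auto

lemma ex1_eq_or_iff: "c \<notin> L \<Longrightarrow> (\<exists>!e. e = c \<or> e \<in> L \<and> Q e) \<longleftrightarrow> (\<forall>e\<in>L. \<not> Q e)"
  by auto

lemma two_of_three:
  assumes distinct: "distinct [x, y, z]" and two: "card {u \<in> {x, y, z}. P u} = 2"
  obtains a b c where "{a, b, c} = {x, y, z}" "distinct [a, b, c]" "P a" "P b" "\<not> P c"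
proof -
  have "{u \<in> {x, y, z}. P u} =
      (if P x then {x} else {}) \<union> (if P y then {y} else {}) \<union> (if P z then {z} else {})"
    by auto
  with two have "card (\<dots>) = 2" by simp
  with distinct consider "P x" "P y" "\<not> P z" | "P x" "\<not> P y" "P z" | "\<not> P x" "P y" "P z"
    by (cases "P x"; cases "P y"; cases "P z") (auto simp: card_insert_if)
  then show ?thesis
  proof cases
    case 1
    then show ?thesis using that[of x y z] distinct by simp
  next
    case 2
    then show ?thesis using that[of x z y] distinct by (auto simp: insert_commute)
  next
    case 3
    then show ?thesis using that[of y z x] distinct by (auto simp: insert_commute)
  qed
qed

section \<open>The gadget at a vertex\<close>

text \<open>The even subsets of {x, y, z} are indexed by the memberships (s, t) of x and y; the membership
  of z is then forced by parity.\<close>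

definition even_part :: "'a \<Rightarrow> 'a \<Rightarrow> 'a \<Rightarrow> bool \<times> bool \<Rightarrow> 'a set" where
  "even_part x y z st = {u. u = x \<and> fst st \<or> u = y \<and> snd st \<or> u = z \<and> fst st \<noteq> snd st}"

definition gadget_edge :: "'a \<Rightarrow> 'a \<Rightarrow> 'a \<Rightarrow> 'a \<Rightarrow> bool \<times> bool \<Rightarrow> 'a \<Rightarrow> 'a hvert set" where
  "gadget_edge x y z v st u = {Inner v (even_part x y z st), Outer v u (u \<in> even_part x y z st)}"

text \<open>Here A st u says that the inner vertex a_{v,S} with S = even_part x y z st is matched with
  b_{v,u,[u \<in> S]}, and B u i says that b_{v,u,i} is already covered by a cross edge.\<close>

definition gadget_matching ::
    "'a \<Rightarrow> 'a \<Rightarrow> 'a \<Rightarrow> ('a \<Rightarrow> bool \<Rightarrow> bool) \<Rightarrow> (bool \<times> bool \<Rightarrow> 'a \<Rightarrow> bool) \<Rightarrow> bool" where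
  "gadget_matching x y z B A \<longleftrightarrow>
     (\<forall>st. \<exists>!u. u \<in> {x, y, z} \<and> A st u) \<and>
     (\<forall>u\<in>{x, y, z}. \<forall>i. if B u i then \<forall>st. A st u \<longrightarrow> (u \<in> even_part x y z st) \<noteq> i
                         else \<exists>!st. A st u \<and> (u \<in> even_part x y z st) = i)"

context
  fixes x y z :: 'a
  assumes distinct: "distinct [x, y, z]"
begin

lemma even_part_mem:
  "x \<in> even_part x y z st \<longleftrightarrow> fst st"
  "y \<in> even_part x y z st \<longleftrightarrow> snd st"
  "z \<in> even_part x y z st \<longleftrightarrow> fst st \<noteq> snd st"
  using distinct by (auto simp: even_part_def)

lemma even_part_inject: "even_part x y z st = even_part x y z st' \<longleftrightarrow> st = st'"
proof
  assume "even_part x y z st = even_part x y z st'"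
  then show "st = st'"
    using even_part_mem(1,2)[of st] even_part_mem(1,2)[of st'] by (simp add: prod_eq_iff)
qed simp

lemma even_part_subset: "even_part x y z st \<subseteq> {x, y, z}"
  by (auto simp: even_part_def)

lemma even_card_even_part: "even (card (even_part x y z st))"
proof -
  obtain s t where "st = (s, t)" by fastforce
  then show ?thesis using distinct by (cases s; cases t) (auto simp: even_part_def Collect_disj_eq)
qed

lemma even_subset_eq_even_part:
  assumes "S \<subseteq> {x, y, z}" and "even (card S)"
  shows "S = even_part x y z (x \<in> S, y \<in> S)"
proof -
  have "S \<in> Pow {x, y, z}" using assms(1) by simp
  then show ?thesis using assms(2) distinct
    by (simp add: Pow_insert; elim disjE; auto simp: even_part_def)
qed

text \<open>The inner vertex indexed by (p, q) has no free neighbour at x or y, so it takes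
  b_{v,z,p \<noteq> q}; the one indexed by (\<not> p, \<not> q) has the same z-neighbour and therefore goes to x
  or to y, and either choice forces the other two.\<close>

lemma gadget_matching_iff:
  assumes "\<And>i. B x i \<longleftrightarrow> i = p" "\<And>i. B y i \<longleftrightarrow> i = q" "\<And>i. \<not> B z i"
  shows "gadget_matching x y z B A \<longleftrightarrow>
    (\<forall>st. \<forall>u\<in>{x, y, z}. A st u \<longleftrightarrow>
       (st, u) \<in> {((\<not> p, \<not> q), x), ((\<not> p, q), z), ((p, \<not> q), y), ((p, q), z)}) \<or>
    (\<forall>st. \<forall>u\<in>{x, y, z}. A st u \<longleftrightarrow>
       (st, u) \<in> {((\<not> p, \<not> q), y), ((\<not> p, q), x), ((p, \<not> q), z), ((p, q), z)})"
proof -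
  have ne: "x \<noteq> y" "y \<noteq> x" "x \<noteq> z" "z \<noteq> x" "y \<noteq> z" "z \<noteq> y"
    using distinct by auto
  show ?thesis
    unfolding gadget_matching_def ex1_mem_triple_iff[OF distinct] ex1_bool_pair_iff
    apply (simp only: assms ball_simps split_paired_All all_bool_eq even_part_mem ne simp_thms
        fst_conv snd_conv insert_iff prod.inject empty_iff)
    by (cases p; cases q; simp only: simp_thms if_True if_False; argo)
qed

lemma gadget_edge_inject: "gadget_edge x y z v st u = gadget_edge x y z v st' u' \<longleftrightarrow> st = st' \<and> u = u'"
  by (auto simp: gadget_edge_def doubleton_eq_iff even_part_inject)

lemma inj_gadget_edge: "inj (case_prod (gadget_edge x y z v))"
  by (auto intro: injI simp: gadget_edge_inject)

lemma Inner_in_gadget_edge: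
  "Inner v' S \<in> gadget_edge x y z v st u \<longleftrightarrow> v' = v \<and> S = even_part x y z st"
  by (auto simp: gadget_edge_def)

lemma Outer_in_gadget_edge:
  "Outer v' u' i \<in> gadget_edge x y z v st u \<longleftrightarrow> v' = v \<and> u' = u \<and> i = (u \<in> even_part x y z st)"
  by (auto simp: gadget_edge_def)

context
  fixes v :: 'a and L :: "'a hvert set set"
  assumes L: "L \<subseteq> case_prod (gadget_edge x y z v) ` (UNIV \<times> {x, y, z})"
begin

private abbreviation "index \<equiv> {(st, u). u \<in> {x, y, z} \<and> gadget_edge x y z v st u \<in> L}"

private lemma L_eq_image: "L = case_prod (gadget_edge x y z v) ` index"
  using L by auto

lemma gadget_edge_in_L_imp_nbr: "gadget_edge x y z v st u \<in> L \<Longrightarrow> u \<in> {x, y, z}"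
  using L by (auto simp: gadget_edge_inject)

lemma ex1_Inner_in_gadget_edges:
  "(\<exists>!e. e \<in> L \<and> Inner v (even_part x y z st) \<in> e) \<longleftrightarrow>
    (\<exists>!u. u \<in> {x, y, z} \<and> gadget_edge x y z v st u \<in> L)"
proof -
  have Inner_iff: "Inner v (even_part x y z st) \<in> case_prod (gadget_edge x y z v) d \<longleftrightarrow> fst d = st" for d
    by (cases d) (simp add: Inner_in_gadget_edge even_part_inject eq_commute)
  have "(\<exists>!e. e \<in> L \<and> Inner v (even_part x y z st) \<in> e) \<longleftrightarrow> (\<exists>!d. d \<in> index \<and> fst d = st)"
    by (subst L_eq_image, subst ex1_mem_image_iff[OF inj_gadget_edge subset_UNIV]) (simp only: Inner_iff)
  also have "\<dots> \<longleftrightarrow> (\<exists>!u. (st, u) \<in> index)"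
    by (rule ex1_fst_eq_iff)
  finally show ?thesis by simp
qed

lemma ex1_Outer_in_gadget_edges:
  assumes "u \<in> {x, y, z}"
  shows "(\<exists>!e. e \<in> L \<and> Outer v u i \<in> e) \<longleftrightarrow>
    (\<exists>!st. gadget_edge x y z v st u \<in> L \<and> (u \<in> even_part x y z st) = i)"
proof -
  have Outer_iff: "Outer v u i \<in> case_prod (gadget_edge x y z v) d \<longleftrightarrow>
      snd d = u \<and> (u \<in> even_part x y z (fst d)) = i" for d
    by (cases d) (auto simp: Outer_in_gadget_edge)
  have "(\<exists>!e. e \<in> L \<and> Outer v u i \<in> e) \<longleftrightarrow>
      (\<exists>!d. d \<in> index \<and> snd d = u \<and> (u \<in> even_part x y z (fst d)) = i)"
    by (subst L_eq_image, subst ex1_mem_image_iff[OF inj_gadget_edge subset_UNIV]) (simp only: Outer_iff)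
  also have "\<dots> \<longleftrightarrow> (\<exists>!st. (st, u) \<in> index \<and> (u \<in> even_part x y z st) = i)"
    by (rule ex1_snd_eq_iff)
  finally show ?thesis using assms by simp
qed

lemma Outer_notin_gadget_edges:
  "(\<forall>e\<in>L. Outer v u i \<notin> e) \<longleftrightarrow>
    (\<forall>st. gadget_edge x y z v st u \<in> L \<longrightarrow> (u \<in> even_part x y z st) \<noteq> i)"
  by (subst L_eq_image) (auto simp: Outer_in_gadget_edge dest: gadget_edge_in_L_imp_nbr)

end

end

section \<open>Decomposition of mu(F,f) into local completions\<close>

fun owner :: "'a hvert \<Rightarrow> 'a" where
  "owner (Inner v S) = v"
| "owner (Outer v u i) = v"

definition gadget_edges :: "'a set set \<Rightarrow> 'a \<Rightarrow> 'a hvert set set" where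
  "gadget_edges E v = {{Inner v S, Outer v u (u \<in> S)} | S u.
     S \<subseteq> nbrs E v \<and> even (card S) \<and> u \<in> nbrs E v}"

definition cross_edges :: "'a set set \<Rightarrow> 'a hvert set set" where
  "cross_edges E = {cross_edge u v i | u v i. {u, v} \<in> E}"

definition prescribed_edges :: "'a set set \<Rightarrow> ('a set \<Rightarrow> bool) \<Rightarrow> 'a hvert set set" where
  "prescribed_edges F f = {cross_edge u v (f {u, v}) | u v. {u, v} \<in> F}"

definition local_completions ::
    "'a set \<Rightarrow> 'a set set \<Rightarrow> 'a set set \<Rightarrow> ('a set \<Rightarrow> bool) \<Rightarrow> 'a \<Rightarrow> 'a hvert set set set" where
  "local_completions W E F f v = {L. L \<subseteq> gadget_edges E v \<and>
     (\<forall>w\<in>hat_verts W E. owner w = v \<longrightarrow> (\<exists>!e. e \<in> prescribed_edges F f \<union> L \<and> w \<in> e))}"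

lemma hat_edges_eq: "hat_edges W E = (\<Union>v\<in>W. gadget_edges E v) \<union> cross_edges E"
  unfolding hat_edges_def gadget_edges_def cross_edges_def by blast

lemma owner_hat_verts: "w \<in> hat_verts W E \<Longrightarrow> owner w \<in> W"
  unfolding hat_verts_def by auto

lemma owner_gadget_edges: "e \<in> gadget_edges E v \<Longrightarrow> w \<in> e \<Longrightarrow> owner w = v"
  unfolding gadget_edges_def by auto

lemma Inner_in_gadget_edges: "e \<in> gadget_edges E v \<Longrightarrow> \<exists>S. Inner v S \<in> e"
  unfolding gadget_edges_def by blast

lemma gadget_edges_disjoint: "e \<in> gadget_edges E v \<Longrightarrow> e \<in> gadget_edges E v' \<Longrightarrow> v = v'"
  by (metis Inner_in_gadget_edges owner.simps(1) owner_gadget_edges)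

lemma gadget_edge_not_cross_edge: "e \<in> gadget_edges E v \<Longrightarrow> e \<notin> cross_edges E'"
proof -
  have "Inner v S \<notin> c" if "c \<in> cross_edges E'" for S c
    using that unfolding cross_edges_def cross_edge_def by blast
  then show "e \<in> gadget_edges E v \<Longrightarrow> e \<notin> cross_edges E'"
    by (auto dest: Inner_in_gadget_edges)
qed

lemma cross_edge_eq_iff: "cross_edge u v i = cross_edge u' v' i' \<longleftrightarrow> i = i' \<and> {u, v} = {u', v'}"
  by (auto simp: cross_edge_def doubleton_eq_iff)

lemma F_of_doubleton_iff:
  "{u, v} \<in> F_of E M \<longleftrightarrow> {u, v} \<in> E \<and> (cross_edge u v False \<in> M) \<noteq> (cross_edge u v True \<in> M)"
proof
  assume "{u, v} \<in> F_of E M"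
  then obtain u' v' where "{u, v} \<in> E" "{u, v} = {u', v'}"
    and "(cross_edge u' v' False \<in> M) \<noteq> (cross_edge u' v' True \<in> M)"
    unfolding F_of_def by blast
  then show "{u, v} \<in> E \<and> (cross_edge u v False \<in> M) \<noteq> (cross_edge u v True \<in> M)"
    by (metis cross_edge_eq_iff)
qed (auto simp: F_of_def)

lemma cross_edge_in_prescribed_edges:
  "cross_edge u v i \<in> prescribed_edges F f \<longleftrightarrow> {u, v} \<in> F \<and> i = f {u, v}"
  by (auto simp: prescribed_edges_def cross_edge_eq_iff)

lemma prescribed_edges_subset: "F \<subseteq> E \<Longrightarrow> prescribed_edges F f \<subseteq> cross_edges E"
  by (auto simp: prescribed_edges_def cross_edges_def)

lemma prescribed_edge_eq_if_Outer_mem: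
  assumes "e \<in> prescribed_edges F f" and "Outer v u i \<in> e"
  shows "e = cross_edge u v i"
proof -
  obtain u' v' where e: "e = cross_edge u' v' (f {u', v'})"
    using assms(1) unfolding prescribed_edges_def by blast
  with assms(2) have "i = f {u', v'} \<and> {u, v} = {u', v'}"
    unfolding cross_edge_def by blast
  then show ?thesis
    unfolding e cross_edge_eq_iff by simp
qed

lemma ex1_Inner_in_prescribed_Un:
  "(\<exists>!e. e \<in> prescribed_edges F f \<union> L \<and> Inner v S \<in> e) \<longleftrightarrow> (\<exists>!e. e \<in> L \<and> Inner v S \<in> e)"
proof -
  have "Inner v S \<notin> e" if "e \<in> prescribed_edges F f" for e
    using that unfolding prescribed_edges_def cross_edge_def by blast
  then have "e \<in> prescribed_edges F f \<union> L \<and> Inner v S \<in> e \<longleftrightarrow> e \<in> L \<and> Inner v S \<in> e" for e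
    by blast
  then show ?thesis by simp
qed

lemma ex1_Outer_in_prescribed_Un:
  assumes "L \<subseteq> gadget_edges E v"
  shows "(\<exists>!e. e \<in> prescribed_edges F f \<union> L \<and> Outer v u i \<in> e) \<longleftrightarrow>
    (if {u, v} \<in> F \<and> i = f {u, v} then \<forall>e\<in>L. Outer v u i \<notin> e else \<exists>!e. e \<in> L \<and> Outer v u i \<in> e)"
proof -
  have prescribed: "e \<in> prescribed_edges F f \<and> Outer v u i \<in> e \<longleftrightarrow>
      {u, v} \<in> F \<and> i = f {u, v} \<and> e = cross_edge u v i" for e
  proof
    assume e: "e \<in> prescribed_edges F f \<and> Outer v u i \<in> e"
    then have "e = cross_edge u v i"
      by (meson prescribed_edge_eq_if_Outer_mem)
    with e show "{u, v} \<in> F \<and> i = f {u, v} \<and> e = cross_edge u v i"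
      by (simp add: cross_edge_in_prescribed_edges)
  next
    assume e: "{u, v} \<in> F \<and> i = f {u, v} \<and> e = cross_edge u v i"
    then have "e \<in> prescribed_edges F f"
      by (simp add: cross_edge_in_prescribed_edges)
    moreover have "Outer v u i \<in> e"
      using e by (simp add: cross_edge_def)
    ultimately show "e \<in> prescribed_edges F f \<and> Outer v u i \<in> e" ..
  qed
  have not_in_L: "cross_edge u v i \<notin> L"
  proof
    assume "cross_edge u v i \<in> L"
    with assms obtain S where "Inner v S \<in> cross_edge u v i"
      using Inner_in_gadget_edges by (meson subsetD)
    then show False by (simp add: cross_edge_def)
  qed
  show ?thesis
  proof (cases "{u, v} \<in> F \<and> i = f {u, v}")
    case True
    then have "e \<in> prescribed_edges F f \<union> L \<and> Outer v u i \<in> e \<longleftrightarrow>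
        e = cross_edge u v i \<or> e \<in> L \<and> Outer v u i \<in> e" for e
      using prescribed by blast
    with True not_in_L show ?thesis by (simp only: simp_thms if_True ex1_eq_or_iff)
  next
    case False
    then have "e \<in> prescribed_edges F f \<union> L \<and> Outer v u i \<in> e \<longleftrightarrow> e \<in> L \<and> Outer v u i \<in> e" for e
      using prescribed by blast
    with False show ?thesis by (simp only: if_False)
  qed
qed

lemma Inner_in_hat_verts: "Inner v S \<in> hat_verts W E \<longleftrightarrow> v \<in> W \<and> S \<subseteq> nbrs E v \<and> even (card S)"
  by (auto simp: hat_verts_def)

lemma Outer_in_hat_verts: "Outer v u i \<in> hat_verts W E \<longleftrightarrow> v \<in> W \<and> u \<in> nbrs E v"
  by (auto simp: hat_verts_def)

context
  fixes x y z :: 'a and E :: "'a set set" and v :: 'a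
  assumes nbrs: "nbrs E v = {x, y, z}" and distinct: "distinct [x, y, z]"
begin

lemma gadget_edges_eq: "gadget_edges E v = case_prod (gadget_edge x y z v) ` (UNIV \<times> {x, y, z})"
proof (intro set_eqI iffI)
  fix e
  assume "e \<in> gadget_edges E v"
  then obtain S u where e: "e = {Inner v S, Outer v u (u \<in> S)}"
    and S: "S \<subseteq> {x, y, z}" "even (card S)" and u: "u \<in> {x, y, z}"
    unfolding gadget_edges_def nbrs by blast
  from S have "S = even_part x y z (x \<in> S, y \<in> S)"
    by (rule even_subset_eq_even_part[OF distinct])
  with e have "e = case_prod (gadget_edge x y z v) ((x \<in> S, y \<in> S), u)"
    by (simp add: gadget_edge_def)
  with u show "e \<in> case_prod (gadget_edge x y z v) ` (UNIV \<times> {x, y, z})"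
    by blast
next
  fix e
  assume "e \<in> case_prod (gadget_edge x y z v) ` (UNIV \<times> {x, y, z})"
  then obtain st u where "e = gadget_edge x y z v st u" "u \<in> {x, y, z}"
    by auto
  then show "e \<in> gadget_edges E v"
    unfolding gadget_edges_def gadget_edge_def nbrs
    using even_part_subset[OF distinct] even_card_even_part[OF distinct] by blast
qed

lemma subset_gadget_edges_eq_image_iff:
  assumes "L \<subseteq> gadget_edges E v" and "T \<subseteq> UNIV \<times> {x, y, z}"
  shows "L = case_prod (gadget_edge x y z v) ` T \<longleftrightarrow>
    (\<forall>st. \<forall>u\<in>{x, y, z}. gadget_edge x y z v st u \<in> L \<longleftrightarrow> (st, u) \<in> T)"
  using subset_image_eq_image_iff[OF inj_on_subset[OF inj_gadget_edge[OF distinct] subset_UNIV]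
      assms(1)[unfolded gadget_edges_eq] assms(2)]
  by auto

lemma hat_verts_owned_by:
  assumes "v \<in> W"
  shows "w \<in> hat_verts W E \<and> owner w = v \<longleftrightarrow>
    (\<exists>st. w = Inner v (even_part x y z st)) \<or> (\<exists>u i. w = Outer v u i \<and> u \<in> {x, y, z})"
proof (cases w)
  case (Inner v' S)
  have "S \<subseteq> {x, y, z} \<and> even (card S) \<longleftrightarrow> (\<exists>st. S = even_part x y z st)"
    using even_subset_eq_even_part[OF distinct] even_part_subset[OF distinct]
      even_card_even_part[OF distinct] by metis
  with Inner assms show ?thesis
    by (auto simp: Inner_in_hat_verts nbrs)
next
  case (Outer v' u i)
  with assms show ?thesis
    by (auto simp: Outer_in_hat_verts nbrs)
qed

end

lemma ex1_in_Un_gadget_edges_iff: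
  assumes "\<forall>v\<in>W. L v \<subseteq> gadget_edges E v" and "owner w \<in> W"
  shows "(\<exists>!e. e \<in> P \<union> (\<Union>v\<in>W. L v) \<and> w \<in> e) \<longleftrightarrow> (\<exists>!e. e \<in> P \<union> L (owner w) \<and> w \<in> e)"
proof -
  have "v = owner w" if "v \<in> W" "e \<in> L v" "w \<in> e" for v e
    using that assms(1) owner_gadget_edges by (metis subsetD)
  then have "e \<in> P \<union> (\<Union>v\<in>W. L v) \<and> w \<in> e \<longleftrightarrow> e \<in> P \<union> L (owner w) \<and> w \<in> e" for e
    using assms(2) by blast
  then show ?thesis by simp
qed

context
  fixes W :: "'a set" and E F :: "'a set set" and f :: "'a set \<Rightarrow> bool"
  assumes doubletons: "\<forall>e\<in>E. \<exists>u v. e = {u, v}"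
    and F_subset: "F \<subseteq> E"
begin

lemma cross_edges_in_iff:
  "M \<inter> cross_edges E = prescribed_edges F f \<longleftrightarrow>
    (\<forall>u v i. {u, v} \<in> E \<longrightarrow> (cross_edge u v i \<in> M \<longleftrightarrow> {u, v} \<in> F \<and> i = f {u, v}))"
proof -
  have "M \<inter> cross_edges E = prescribed_edges F f \<longleftrightarrow>
      (\<forall>c\<in>cross_edges E. c \<in> M \<longleftrightarrow> c \<in> prescribed_edges F f)"
    using prescribed_edges_subset[OF F_subset, of f] by blast
  also have "\<dots> \<longleftrightarrow> (\<forall>u v i. {u, v} \<in> E \<longrightarrow>
      (cross_edge u v i \<in> M \<longleftrightarrow> cross_edge u v i \<in> prescribed_edges F f))"
    by (auto simp: cross_edges_def)
  finally show ?thesis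
    by (simp only: cross_edge_in_prescribed_edges)
qed

lemma F_of_eq_if_cross_edges:
  assumes cross: "\<forall>u v i. {u, v} \<in> E \<longrightarrow> (cross_edge u v i \<in> M \<longleftrightarrow> {u, v} \<in> F \<and> i = f {u, v})"
  shows "F_of E M = F"
proof (intro set_eqI iffI)
  fix e
  assume e: "e \<in> F_of E M"
  then obtain u v where "e = {u, v}" by (auto simp: F_of_def)
  with e cross show "e \<in> F" by (cases "f {u, v}") (auto simp: F_of_doubleton_iff)
next
  fix e
  assume e: "e \<in> F"
  then obtain u v where "e = {u, v}" using F_subset doubletons by blast
  with e cross F_subset show "e \<in> F_of E M" by (auto simp: F_of_doubleton_iff)
qed

lemma uniform_F_of_iff:
  "uniform E M \<and> F_of E M = F \<and> (\<forall>u v. {u, v} \<in> F \<longrightarrow> cross_edge u v (f {u, v}) \<in> M) \<longleftrightarrow>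
    M \<inter> cross_edges E = prescribed_edges F f"
  (is "?conditions \<longleftrightarrow> _")
  unfolding cross_edges_in_iff
proof (rule iffI)
  assume conditions: ?conditions
  show "\<forall>u v i. {u, v} \<in> E \<longrightarrow> (cross_edge u v i \<in> M \<longleftrightarrow> {u, v} \<in> F \<and> i = f {u, v})"
  proof (intro allI impI)
    fix u v i
    assume uv: "{u, v} \<in> E"
    have not_both: "\<not> (cross_edge u v False \<in> M \<and> cross_edge u v True \<in> M)"
      using conditions uv by (simp add: uniform_def)
    have F: "{u, v} \<in> F \<longleftrightarrow> (cross_edge u v False \<in> M) \<noteq> (cross_edge u v True \<in> M)"
      using conditions uv F_of_doubleton_iff[of u v E M] by simp
    have f: "{u, v} \<in> F \<Longrightarrow> cross_edge u v (f {u, v}) \<in> M"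
      using conditions by blast
    show "cross_edge u v i \<in> M \<longleftrightarrow> {u, v} \<in> F \<and> i = f {u, v}"
      using not_both F f by (cases i; cases "f {u, v}") auto
  qed
next
  assume cross: "\<forall>u v i. {u, v} \<in> E \<longrightarrow> (cross_edge u v i \<in> M \<longleftrightarrow> {u, v} \<in> F \<and> i = f {u, v})"
  have "uniform E M"
    using cross by (auto simp: uniform_def)
  moreover have "F_of E M = F"
    using cross by (rule F_of_eq_if_cross_edges)
  moreover have "\<forall>u v. {u, v} \<in> F \<longrightarrow> cross_edge u v (f {u, v}) \<in> M"
    using cross F_subset by blast
  ultimately show ?conditions by blast
qed

lemma mu_set_eq:
  "mu_set W E F f = {M. perfect_matching (hat_verts W E) (hat_edges W E) M \<and>
     M \<inter> cross_edges E = prescribed_edges F f}"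
  unfolding mu_set_def uniform_F_of_iff ..

lemma Un_gadget_edges_inter_cross_edges:
  assumes "\<forall>v\<in>W. L v \<subseteq> gadget_edges E v"
  shows "(prescribed_edges F f \<union> (\<Union>v\<in>W. L v)) \<inter> cross_edges E = prescribed_edges F f"
proof -
  have "e \<notin> cross_edges E" if "e \<in> (\<Union>v\<in>W. L v)" for e
  proof -
    from that obtain v where "v \<in> W" "e \<in> L v" by blast
    with assms have "e \<in> gadget_edges E v" by blast
    then show ?thesis by (rule gadget_edge_not_cross_edge)
  qed
  then have "(\<Union>v\<in>W. L v) \<inter> cross_edges E = {}" by blast
  then show ?thesis
    using prescribed_edges_subset[OF F_subset] by (simp add: Int_Un_distrib2 Int_absorb2)
qed

lemma Un_gadget_edges_inter_gadget_edges:
  assumes L: "\<forall>v\<in>W. L v \<subseteq> gadget_edges E v" and v: "v \<in> W"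
  shows "(prescribed_edges F f \<union> (\<Union>v\<in>W. L v)) \<inter> gadget_edges E v = L v"
proof (intro equalityI subsetI)
  fix e
  assume e: "e \<in> (prescribed_edges F f \<union> (\<Union>v\<in>W. L v)) \<inter> gadget_edges E v"
  then have "e \<notin> cross_edges E"
    by (blast dest: gadget_edge_not_cross_edge)
  then have "e \<notin> prescribed_edges F f"
    using prescribed_edges_subset[OF F_subset, of f] by blast
  then obtain v' where v': "v' \<in> W" "e \<in> L v'"
    using e by blast
  with L have "e \<in> gadget_edges E v'" by blast
  with e have "v' = v" by (blast dest: gadget_edges_disjoint)
  with v' show "e \<in> L v" by simp
next
  fix e
  assume "e \<in> L v"
  with L v show "e \<in> (prescribed_edges F f \<union> (\<Union>v\<in>W. L v)) \<inter> gadget_edges E v" by blast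
qed

lemma perfect_matching_Un_gadget_edges_iff:
  assumes L: "\<forall>v\<in>W. L v \<subseteq> gadget_edges E v"
  shows "perfect_matching (hat_verts W E) (hat_edges W E) (prescribed_edges F f \<union> (\<Union>v\<in>W. L v)) \<longleftrightarrow>
    (\<forall>v\<in>W. L v \<in> local_completions W E F f v)"
proof -
  have "(\<Union>v\<in>W. L v) \<subseteq> (\<Union>v\<in>W. gadget_edges E v)"
    using L by (intro UN_mono) auto
  then have subset: "prescribed_edges F f \<union> (\<Union>v\<in>W. L v) \<subseteq> hat_edges W E"
    using prescribed_edges_subset[OF F_subset, of f] unfolding hat_edges_eq by blast
  have "(\<exists>!e. e \<in> prescribed_edges F f \<union> (\<Union>v\<in>W. L v) \<and> w \<in> e) \<longleftrightarrow>
      (\<exists>!e. e \<in> prescribed_edges F f \<union> L (owner w) \<and> w \<in> e)" if "w \<in> hat_verts W E" for w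
    using ex1_in_Un_gadget_edges_iff[OF L owner_hat_verts[OF that]] .
  then have "perfect_matching (hat_verts W E) (hat_edges W E) (prescribed_edges F f \<union> (\<Union>v\<in>W. L v)) \<longleftrightarrow>
      (\<forall>w\<in>hat_verts W E. \<exists>!e. e \<in> prescribed_edges F f \<union> L (owner w) \<and> w \<in> e)"
    using subset by (simp add: perfect_matching_def)
  also have "\<dots> \<longleftrightarrow>
      (\<forall>v\<in>W. \<forall>w\<in>hat_verts W E. owner w = v \<longrightarrow> (\<exists>!e. e \<in> prescribed_edges F f \<union> L v \<and> w \<in> e))"
    by (rule ball_fibres_iff[OF owner_hat_verts])
  also have "\<dots> \<longleftrightarrow> (\<forall>v\<in>W. L v \<in> local_completions W E F f v)"
    using L by (simp add: local_completions_def)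
  finally show ?thesis .
qed

lemma mu_set_eq_Un_gadget_edges:
  assumes "M \<in> mu_set W E F f"
  shows "M = prescribed_edges F f \<union> (\<Union>v\<in>W. M \<inter> gadget_edges E v)"
proof -
  have "M \<subseteq> (\<Union>v\<in>W. gadget_edges E v) \<union> cross_edges E"
    using assms by (simp add: mu_set_eq perfect_matching_def hat_edges_eq)
  then have "M = (M \<inter> cross_edges E) \<union> (\<Union>v\<in>W. M \<inter> gadget_edges E v)"
    by blast
  then show ?thesis
    using assms by (simp add: mu_set_eq)
qed

lemma Un_local_completions_in_mu_set:
  assumes "L \<in> (\<Pi>\<^sub>E v\<in>W. local_completions W E F f v)"
  shows "prescribed_edges F f \<union> (\<Union>v\<in>W. L v) \<in> mu_set W E F f"
proof -
  have L: "\<forall>v\<in>W. L v \<subseteq> gadget_edges E v"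
    using assms by (simp add: PiE_iff local_completions_def)
  have "perfect_matching (hat_verts W E) (hat_edges W E) (prescribed_edges F f \<union> (\<Union>v\<in>W. L v))"
    using assms perfect_matching_Un_gadget_edges_iff[OF L] by (simp add: PiE_iff)
  with Un_gadget_edges_inter_cross_edges[OF L] show ?thesis
    by (simp add: mu_set_eq)
qed

lemma restrict_gadget_edges_in_local_completions:
  assumes M: "M \<in> mu_set W E F f"
  shows "restrict (\<lambda>v. M \<inter> gadget_edges E v) W \<in> (\<Pi>\<^sub>E v\<in>W. local_completions W E F f v)"
proof -
  have "perfect_matching (hat_verts W E) (hat_edges W E) M"
    using M by (simp add: mu_set_eq)
  then have "perfect_matching (hat_verts W E) (hat_edges W E)
      (prescribed_edges F f \<union> (\<Union>v\<in>W. M \<inter> gadget_edges E v))"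
    using mu_set_eq_Un_gadget_edges[OF M] by metis
  moreover have "\<forall>v\<in>W. M \<inter> gadget_edges E v \<subseteq> gadget_edges E v"
    by blast
  ultimately have "\<forall>v\<in>W. M \<inter> gadget_edges E v \<in> local_completions W E F f v"
    by (simp only: perfect_matching_Un_gadget_edges_iff)
  then show ?thesis
    by (simp add: restrict_PiE_iff)
qed

lemma bij_betw_local_completions:
  "bij_betw (\<lambda>L. prescribed_edges F f \<union> (\<Union>v\<in>W. L v))
     (\<Pi>\<^sub>E v\<in>W. local_completions W E F f v) (mu_set W E F f)"
proof (rule bij_betw_byWitness[where f' = "\<lambda>M. restrict (\<lambda>v. M \<inter> gadget_edges E v) W"])
  show "\<forall>L\<in>\<Pi>\<^sub>E v\<in>W. local_completions W E F f v.
      restrict (\<lambda>v. (prescribed_edges F f \<union> (\<Union>v\<in>W. L v)) \<inter> gadget_edges E v) W = L"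
  proof
    fix L
    assume L: "L \<in> (\<Pi>\<^sub>E v\<in>W. local_completions W E F f v)"
    then have "\<forall>v\<in>W. L v \<subseteq> gadget_edges E v"
      by (simp add: PiE_iff local_completions_def)
    then have "restrict (\<lambda>v. (prescribed_edges F f \<union> (\<Union>v\<in>W. L v)) \<inter> gadget_edges E v) W = restrict L W"
      using Un_gadget_edges_inter_gadget_edges by (intro restrict_ext)
    also have "\<dots> = L"
      using L by (rule PiE_restrict)
    finally show "restrict (\<lambda>v. (prescribed_edges F f \<union> (\<Union>v\<in>W. L v)) \<inter> gadget_edges E v) W = L" .
  qed
  show "\<forall>M\<in>mu_set W E F f. prescribed_edges F f \<union> (\<Union>v\<in>W. restrict (\<lambda>v. M \<inter> gadget_edges E v) W v) = M"
    using mu_set_eq_Un_gadget_edges by simp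
  show "(\<lambda>L. prescribed_edges F f \<union> (\<Union>v\<in>W. L v)) ` (\<Pi>\<^sub>E v\<in>W. local_completions W E F f v)
      \<subseteq> mu_set W E F f"
    using Un_local_completions_in_mu_set by blast
  show "(\<lambda>M. restrict (\<lambda>v. M \<inter> gadget_edges E v) W) ` mu_set W E F f
      \<subseteq> (\<Pi>\<^sub>E v\<in>W. local_completions W E F f v)"
    using restrict_gadget_edges_in_local_completions by blast
qed

lemma card_mu_set:
  assumes "finite W"
  shows "card (mu_set W E F f) = (\<Prod>v\<in>W. card (local_completions W E F f v))"
proof -
  have "card (mu_set W E F f) = card (\<Pi>\<^sub>E v\<in>W. local_completions W E F f v)"
    using bij_betw_same_card[OF bij_betw_local_completions] by (rule sym)
  also have "\<dots> = (\<Prod>v\<in>W. card (local_completions W E F f v))"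
    by (rule card_PiE[OF assms])
  finally show ?thesis .
qed

section \<open>Counting local completions\<close>

lemma nbrs_two_factor_split:
  assumes "card (nbrs E v) = 3" and "card {e \<in> F. v \<in> e} = 2"
  obtains x y z where "nbrs E v = {x, y, z}" "distinct [x, y, z]"
    "{v, x} \<in> F" "{v, y} \<in> F" "{v, z} \<notin> F"
proof -
  obtain x y z where nbrs: "nbrs E v = {x, y, z}" and distinct: "distinct [x, y, z]"
    using assms(1) by (auto simp: card_3_iff)
  have "{e \<in> F. v \<in> e} \<subseteq> (\<lambda>u. {v, u}) ` {u \<in> {x, y, z}. {v, u} \<in> F}"
  proof
    fix e
    assume e: "e \<in> {e \<in> F. v \<in> e}"
    then obtain a b where "e = {a, b}"
      using F_subset doubletons by blast
    with e obtain u where "e = {v, u}"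
      by blast
    with e F_subset nbrs show "e \<in> (\<lambda>u. {v, u}) ` {u \<in> {x, y, z}. {v, u} \<in> F}"
      unfolding nbrs_def by blast
  qed
  then have "{e \<in> F. v \<in> e} = (\<lambda>u. {v, u}) ` {u \<in> {x, y, z}. {v, u} \<in> F}"
    by blast
  moreover have "inj_on (\<lambda>u. {v, u}) {u \<in> {x, y, z}. {v, u} \<in> F}"
    by (rule inj_onI) (auto simp: doubleton_eq_iff)
  ultimately have "card {u \<in> {x, y, z}. {v, u} \<in> F} = 2"
    using assms(2) by (simp add: card_image)
  with distinct obtain a b c where "{a, b, c} = {x, y, z}" "distinct [a, b, c]"
    "{v, a} \<in> F" "{v, b} \<in> F" "{v, c} \<notin> F"
    by (rule two_of_three)
  with nbrs show ?thesis
    by (intro that[of a b c]) simp_all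
qed

lemma local_completions_iff:
  assumes v: "v \<in> W" and nbrs: "nbrs E v = {x, y, z}" and distinct: "distinct [x, y, z]"
  shows "L \<in> local_completions W E F f v \<longleftrightarrow> L \<subseteq> gadget_edges E v \<and>
    gadget_matching x y z (\<lambda>u i. {u, v} \<in> F \<and> i = f {u, v}) (\<lambda>st u. gadget_edge x y z v st u \<in> L)"
proof (cases "L \<subseteq> gadget_edges E v")
  case False
  then show ?thesis by (simp add: local_completions_def)
next
  case True
  then have L: "L \<subseteq> case_prod (gadget_edge x y z v) ` (UNIV \<times> {x, y, z})"
    by (simp only: gadget_edges_eq[OF nbrs distinct])
  have owned: "(\<forall>w\<in>hat_verts W E. owner w = v \<longrightarrow> Q w) \<longleftrightarrow>
      (\<forall>st. Q (Inner v (even_part x y z st))) \<and> (\<forall>u\<in>{x, y, z}. \<forall>i. Q (Outer v u i))" for Q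
  proof -
    have "(\<forall>w\<in>hat_verts W E. owner w = v \<longrightarrow> Q w) \<longleftrightarrow>
        (\<forall>w. (\<exists>st. w = Inner v (even_part x y z st)) \<or> (\<exists>u i. w = Outer v u i \<and> u \<in> {x, y, z}) \<longrightarrow> Q w)"
      by (simp only: Ball_def imp_conjL[symmetric] hat_verts_owned_by[OF nbrs distinct v])
    then show ?thesis by blast
  qed
  have inner: "(\<exists>!e. e \<in> prescribed_edges F f \<union> L \<and> Inner v (even_part x y z st) \<in> e) \<longleftrightarrow>
      (\<exists>!u. u \<in> {x, y, z} \<and> gadget_edge x y z v st u \<in> L)" for st
    by (simp only: ex1_Inner_in_prescribed_Un ex1_Inner_in_gadget_edges[OF distinct L])
  have outer: "(\<exists>!e. e \<in> prescribed_edges F f \<union> L \<and> Outer v u i \<in> e) \<longleftrightarrow>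
      (if {u, v} \<in> F \<and> i = f {u, v}
       then \<forall>st. gadget_edge x y z v st u \<in> L \<longrightarrow> (u \<in> even_part x y z st) \<noteq> i
       else \<exists>!st. gadget_edge x y z v st u \<in> L \<and> (u \<in> even_part x y z st) = i)"
    if "u \<in> {x, y, z}" for u i
    by (simp only: ex1_Outer_in_prescribed_Un[OF True] Outer_notin_gadget_edges[OF distinct L]
        ex1_Outer_in_gadget_edges[OF distinct L that])
  show ?thesis
    unfolding local_completions_def gadget_matching_def mem_Collect_eq owned
    using True inner outer by simp
qed

lemma local_completions_eq:
  assumes v: "v \<in> W" and nbrs: "nbrs E v = {x, y, z}" and distinct: "distinct [x, y, z]"
    and F: "{v, x} \<in> F" "{v, y} \<in> F" "{v, z} \<notin> F"
  defines "p \<equiv> f {v, x}" and "q \<equiv> f {v, y}"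
  shows "local_completions W E F f v =
    {case_prod (gadget_edge x y z v) ` {((\<not> p, \<not> q), x), ((\<not> p, q), z), ((p, \<not> q), y), ((p, q), z)},
     case_prod (gadget_edge x y z v) ` {((\<not> p, \<not> q), y), ((\<not> p, q), x), ((p, \<not> q), z), ((p, q), z)}}"
    (is "_ = {?g ` ?T1, ?g ` ?T2}")
proof -
  have B: "\<And>i. {x, v} \<in> F \<and> i = f {x, v} \<longleftrightarrow> i = p" "\<And>i. {y, v} \<in> F \<and> i = f {y, v} \<longleftrightarrow> i = q"
    "\<And>i. \<not> ({z, v} \<in> F \<and> i = f {z, v})"
    using F by (auto simp: p_def q_def insert_commute)
  have T: "?T1 \<subseteq> UNIV \<times> {x, y, z}" "?T2 \<subseteq> UNIV \<times> {x, y, z}"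
    by auto
  have gadget_edges: "?g ` ?T1 \<subseteq> gadget_edges E v" "?g ` ?T2 \<subseteq> gadget_edges E v"
    unfolding gadget_edges_eq[OF nbrs distinct] by (rule image_mono[OF T(1)], rule image_mono[OF T(2)])
  have "L \<in> local_completions W E F f v \<longleftrightarrow> L = ?g ` ?T1 \<or> L = ?g ` ?T2" for L
  proof -
    have "L \<in> local_completions W E F f v \<longleftrightarrow> L \<subseteq> gadget_edges E v \<and>
        ((\<forall>st. \<forall>u\<in>{x, y, z}. gadget_edge x y z v st u \<in> L \<longleftrightarrow> (st, u) \<in> ?T1) \<or>
         (\<forall>st. \<forall>u\<in>{x, y, z}. gadget_edge x y z v st u \<in> L \<longleftrightarrow> (st, u) \<in> ?T2))"
      unfolding local_completions_iff[OF v nbrs distinct]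
      by (simp only: gadget_matching_iff[OF distinct, where B = "\<lambda>u i. {u, v} \<in> F \<and> i = f {u, v}", OF B])
    also have "\<dots> \<longleftrightarrow> L \<subseteq> gadget_edges E v \<and> (L = ?g ` ?T1 \<or> L = ?g ` ?T2)"
      by (rule conj_cong[OF refl])
        (simp only: subset_gadget_edges_eq_image_iff[OF nbrs distinct _ T(1)]
          subset_gadget_edges_eq_image_iff[OF nbrs distinct _ T(2)])
    also have "\<dots> \<longleftrightarrow> L = ?g ` ?T1 \<or> L = ?g ` ?T2"
      using gadget_edges by blast
    finally show ?thesis .
  qed
  then show ?thesis
    by (simp only: set_eq_iff insert_iff empty_iff simp_thms)
qed

lemma card_local_completions:
  assumes v: "v \<in> W" and "card (nbrs E v) = 3" and "card {e \<in> F. v \<in> e} = 2"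
  shows "card (local_completions W E F f v) = 2"
proof -
  obtain x y z where nbrs: "nbrs E v = {x, y, z}" and distinct: "distinct [x, y, z]"
    and F: "{v, x} \<in> F" "{v, y} \<in> F" "{v, z} \<notin> F"
    using assms(2,3) by (rule nbrs_two_factor_split)
  define p q where "p = f {v, x}" and "q = f {v, y}"
  let ?g = "case_prod (gadget_edge x y z v)"
  have "?g ((\<not> p, \<not> q), x) \<notin> ?g ` {((\<not> p, \<not> q), y), ((\<not> p, q), x), ((p, \<not> q), z), ((p, q), z)}"
    using distinct by (auto simp: gadget_edge_inject[OF distinct])
  then have "?g ` {((\<not> p, \<not> q), x), ((\<not> p, q), z), ((p, \<not> q), y), ((p, q), z)} \<noteq>
      ?g ` {((\<not> p, \<not> q), y), ((\<not> p, q), x), ((p, \<not> q), z), ((p, q), z)}"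
    by blast
  then show ?thesis
    unfolding local_completions_eq[OF v nbrs distinct F] p_def q_def by simp
qed

end

theorem mainTheorem3:
  fixes U V :: "'a set" and E F :: "'a set set" and f :: "'a set \<Rightarrow> bool" and m :: nat
  assumes "cubic_bipartite U V E"
    and "card U = m" and "card V = m"
    and "two_factor (U \<union> V) E F"
  shows "card (mu_set (U \<union> V) E F f) = 2 ^ (2 * m)"
proof -
  have "\<forall>e\<in>E. \<exists>u\<in>U. \<exists>v\<in>V. e = {u, v}"
    using assms(1) by (simp add: cubic_bipartite_def)
  then have doubletons: "\<forall>e\<in>E. \<exists>u v. e = {u, v}"
    by (meson bexE)
  have finite: "finite (U \<union> V)" and cubic: "\<forall>v\<in>U \<union> V. card (nbrs E v) = 3"
    using assms(1) by (simp_all add: cubic_bipartite_def)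
  have F_subset: "F \<subseteq> E" and two_factor: "\<forall>v\<in>U \<union> V. card {e \<in> F. v \<in> e} = 2"
    using assms(4) by (auto simp: two_factor_def)
  have card_vertices: "card (U \<union> V) = 2 * m"
    using assms(1-3) card_Un_disjoint[of U V] by (simp add: cubic_bipartite_def)
  have "card (mu_set (U \<union> V) E F f) = (\<Prod>v\<in>U \<union> V. card (local_completions (U \<union> V) E F f v))"
    by (rule card_mu_set[OF doubletons F_subset finite])
  also have "\<dots> = (\<Prod>v\<in>U \<union> V. 2)"
  proof (rule prod.cong[OF refl])
    fix v
    assume "v \<in> U \<union> V"
    with cubic two_factor show "card (local_completions (U \<union> V) E F f v) = 2"
      by (intro card_local_completions[OF doubletons F_subset]) simp_all
  qed
  also have "\<dots> = 2 ^ (2 * m)"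
    using card_vertices by simp
  finally show ?thesis .
qed

end
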